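(* Let $\theta>0$, $\alpha>0$ and $x\in(0,1)\setminus\mathbb{Q}$. Suppose there exist a constant $C>0$ and a real polynomial $P$ of degree less than $\alpha$ such that $|f_\theta(x+h)-P(h)|\le C|h|^\alpha$ for all $h$ in a neighborhood of $0$. Then $P$ is the zero polynomial.
   Context: For $\theta>0$, the generalized Thomae function $f_\theta:\mathbb{R}\to\mathbb{R}$ is defined by $f_\theta(0)=1$, $f_\theta(x)=q^{-\theta}$ if $x$ is rational written as $x=p/q$ with $p\in\mathbb{Z}$, $q\in\mathbb{N}$ and $\gcd(p,q)=1$, and $f_\theta(x)=0$ if $x$ is irrational. *)

theory Defs
  imports "HOL-Analysis.Analysis" "HOL-Computational_Algebra.Polynomial"
begin

text \<open>Generalized Thomae function: f(p/q) = q^(-theta) for p/q in lowest terms with q > 0,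
  f(0) = 1 (since 0 = 0/1), and f(x) = 0 for irrational x.\<close>
definition thomae :: "real \<Rightarrow> real \<Rightarrow> real" where
  "thomae \<theta> x =
     (if x \<in> \<rat> then
        (real_of_int (snd (quotient_of (THE r. of_rat r = x)))) powr (- \<theta>)
      else 0)"

end

theory Submission
  imports Defs
begin

text \<open>Near an irrational point x the function vanishes at every x + h with h rational,
  so the Hoelder-type estimate says |P h| \<le> C |h| powr \<alpha> for rational h near 0.
  Writing P h = h^k q h with q 0 \<noteq> 0 and k \<le> degree P < \<alpha>, this forces
  |q h| \<le> C |h| powr (\<alpha> - k) \<rightarrow> 0 along the rationals, contradicting q 0 \<noteq> 0.\<close>

lemma thomae_irrational: "y \<notin> \<rat> \<Longrightarrow> thomae \<theta> y = 0"
  by (simp add: thomae_def)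

lemma zero_islimpt_Rats: "(0::real) islimpt \<rat>"
  unfolding islimpt_approachable
proof (intro allI impI)
  fix \<epsilon> :: real
  assume "\<epsilon> > 0"
  then obtain r where "r \<in> \<rat>" "0 < r" "r < \<epsilon>"
    using Rats_dense_in_real by blast
  then show "\<exists>r\<in>\<rat>. r \<noteq> 0 \<and> dist r (0::real) < \<epsilon>"
    by (intro bexI[of _ r]) (auto simp: dist_real_def)
qed

lemma poly_eq_0_if_eventually_bounded_powr:
  fixes P :: "real poly" and F :: "real filter"
  assumes "F \<le> at 0" and "F \<noteq> bot" and "real (degree P) < \<alpha>"
    and bound: "\<forall>\<^sub>F h in F. \<bar>poly P h\<bar> \<le> C * \<bar>h\<bar> powr \<alpha>"
  shows "P = 0"
proof (rule ccontr)
  assume "P \<noteq> 0"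
  define k where "k = order 0 P"
  obtain q where P_eq: "P = [:0, 1:] ^ k * q" and "\<not> [:0, 1:] dvd q"
    using order_decomp[OF \<open>P \<noteq> 0\<close>, of 0] k_def by auto
  then have "poly q 0 \<noteq> 0"
    using dvd_iff_poly_eq_0[of 0 q] by simp
  have "real k < \<alpha>"
    using order_degree[OF \<open>P \<noteq> 0\<close>, of 0] assms(3) k_def by linarith
  have "\<forall>\<^sub>F h in F. h \<noteq> 0"
    by (rule filter_leD[OF assms(1)]) (simp add: eventually_at_filter)
  with bound have "\<forall>\<^sub>F h in F. \<bar>poly q h\<bar> \<le> C * \<bar>h\<bar> powr (\<alpha> - real k)"
  proof eventually_elim
    case (elim h)
    have "\<bar>h\<bar> ^ k * \<bar>poly q h\<bar> = \<bar>poly P h\<bar>"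
      by (simp add: P_eq abs_mult power_abs)
    also have "\<dots> \<le> C * \<bar>h\<bar> powr \<alpha>"
      using elim by simp
    also have "\<dots> = \<bar>h\<bar> ^ k * (C * \<bar>h\<bar> powr (\<alpha> - real k))"
      using elim by (simp add: powr_diff powr_realpow)
    finally show ?case
      using elim by (simp add: mult_le_cancel_left_pos)
  qed
  moreover have "((\<lambda>h. h) \<longlongrightarrow> 0) F"
    using tendsto_mono[OF assms(1) tendsto_ident_at] .
  then have "((\<lambda>h. \<bar>poly q h\<bar>) \<longlongrightarrow> \<bar>poly q 0\<bar>) F"
    by (intro tendsto_intros)
  moreover have "((\<lambda>h. C * \<bar>h\<bar> powr (\<alpha> - real k)) \<longlongrightarrow> C * 0) F"
    using \<open>((\<lambda>h. h) \<longlongrightarrow> 0) F\<close> \<open>real k < \<alpha>\<close>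
    by (intro tendsto_intros tendsto_zero_powrI) (auto intro: tendsto_rabs_zero)
  ultimately have "\<bar>poly q 0\<bar> \<le> C * 0"
    using tendsto_le[OF assms(2)] by blast
  with \<open>poly q 0 \<noteq> 0\<close> show False
    by simp
qed

theorem mainTheorem2:
  fixes \<theta> \<alpha> x :: real and P :: "real poly"
  assumes "\<theta> > 0" and "\<alpha> > 0"
    and "x \<in> {0<..<1}" and "x \<notin> \<rat>"
    and "real (degree P) < \<alpha>"
    and "\<exists>C>0. \<exists>\<delta>>0. \<forall>h. \<bar>h\<bar> < \<delta> \<longrightarrow>
           \<bar>thomae \<theta> (x + h) - poly P h\<bar> \<le> C * \<bar>h\<bar> powr \<alpha>"
  shows "P = 0"
proof -
  obtain C \<delta> where "\<delta> > 0" and estimate: "\<And>h. \<bar>h\<bar> < \<delta> \<Longrightarrow>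
      \<bar>thomae \<theta> (x + h) - poly P h\<bar> \<le> C * \<bar>h\<bar> powr \<alpha>"
    using assms(6) by blast
  have "\<forall>\<^sub>F h in at 0 within \<rat>. \<bar>h\<bar> < \<delta> \<and> h \<in> \<rat>"
    using \<open>\<delta> > 0\<close> by (auto simp: eventually_at)
  then have "\<forall>\<^sub>F h in at 0 within \<rat>. \<bar>poly P h\<bar> \<le> C * \<bar>h\<bar> powr \<alpha>"
  proof eventually_elim
    case (elim h)
    then have "x + h \<notin> \<rat>"
      using \<open>x \<notin> \<rat>\<close> Rats_add_iff by blast
    with estimate[of h] elim show ?case
      by (simp add: thomae_irrational)
  qed
  moreover have "at (0::real) within \<rat> \<noteq> bot"
    using zero_islimpt_Rats trivial_limit_within by blast
  ultimately show "P = 0"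
    using poly_eq_0_if_eventually_bounded_powr[OF at_le[of \<rat> UNIV] _ assms(5)] by simp
qed

end
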